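(* Let $\mathcal{G}$ be a Fischer space of symplectic type and let $\ell=\{a,b,c\}$ be a line. Suppose $\ell$ lies in two different complete quadrilaterals $\pi$ and $\pi'$, where $\pi$ has points $a,b,c,x,y,z$ and lines $\{a,b,c\},\{a,y,z\},\{b,x,z\},\{c,x,y\}$, and $\pi'$ has points $a,b,c,p,q,r$ and lines $\{a,b,c\},\{a,q,r\},\{b,p,r\},\{c,p,q\}$. Then exactly one of the following two cases occurs: (a) $p\sim x$, $q\sim y$, $r\sim z$, and $p\not\sim y$, $p\not\sim z$, $q\not\sim x$, $q\not\sim z$, $r\not\sim x$, $r\not\sim y$. In this case $w:=p\wedge x=q\wedge y=r\wedge z$, and $w$ is not collinear with any of $a,b,c$. (b) $p\not\sim x$, $q\not\sim y$, $r\not\sim z$, and $p\sim y$, $p\sim z$, $q\sim x$, $q\sim z$, $r\sim x$, $r\sim y$. In this case $d:=r\wedge y=q\wedge z$, $e:=r\wedge x=p\wedge z$, $f:=q\wedge x=p\wedge y$; the triples $\{a,e,f\},\{b,d,f\},\{c,d,e\}$ are lines, and the points $a,b,c,d,e,f$ form another complete quadrilateral $\pi''$ containing $\ell$.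
   Context: A 3-transposition group is a pair $(G,D)$ where $D$ is a conjugacy class of involutions generating $G$ with $de$ of order at most $3$ for all $d,e\in D$. Its Fischer space has point set $D$ and as lines the $3$-subsets consisting of the three involutions of a subgroup isomorphic to $\mathrm{Sym}(3)$. Distinct points on a common line are collinear ($p\sim q$), and $p\wedge q$ is the third point of that line. A subspace is a nonempty subset closed under $\wedge$. The subspace generated by two distinct intersecting lines is either a complete quadrilateral (6 points, 4 lines, any two lines meeting in one point, each point on two lines) or an affine plane of order $3$; the Fischer space is of symplectic type if it is always a complete quadrilateral. A complete quadrilateral in $\mathcal{G}$ means a subspace isomorphic to it. *)

theory Defs
  imports "HOL-Algebra.Algebra"
begin

definition three_transposition_group :: "('a, 'b) monoid_scheme \<Rightarrow> 'a set \<Rightarrow> bool" where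
  "three_transposition_group G D \<longleftrightarrow>
     group G \<and> D \<subseteq> carrier G \<and>
     (\<exists>d \<in> carrier G. D = {g \<otimes>\<^bsub>G\<^esub> d \<otimes>\<^bsub>G\<^esub> inv\<^bsub>G\<^esub> g | g. g \<in> carrier G}) \<and>
     (\<forall>d \<in> D. group.ord G d = 2) \<and>
     generate G D = carrier G \<and>
     (\<forall>d \<in> D. \<forall>e \<in> D. group.ord G (d \<otimes>\<^bsub>G\<^esub> e) \<in> {1, 2, 3})"

definition fischer_line :: "('a, 'b) monoid_scheme \<Rightarrow> 'a set \<Rightarrow> 'a set \<Rightarrow> bool" where
  "fischer_line G D L \<longleftrightarrow>
     L \<subseteq> D \<and> card L = 3 \<and>
     (\<exists>H. subgroup H G \<and> (G\<lparr>carrier := H\<rparr>) \<cong> sym_group 3 \<and>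
          L = {h \<in> H. group.ord G h = 2})"

definition collinear :: "('a, 'b) monoid_scheme \<Rightarrow> 'a set \<Rightarrow> 'a \<Rightarrow> 'a \<Rightarrow> bool" where
  "collinear G D p q \<longleftrightarrow> p \<noteq> q \<and> (\<exists>L. fischer_line G D L \<and> p \<in> L \<and> q \<in> L)"

definition wedge :: "('a, 'b) monoid_scheme \<Rightarrow> 'a set \<Rightarrow> 'a \<Rightarrow> 'a \<Rightarrow> 'a" where
  "wedge G D p q = (THE r. r \<noteq> p \<and> r \<noteq> q \<and> fischer_line G D {p, q, r})"

definition fischer_subspace :: "('a, 'b) monoid_scheme \<Rightarrow> 'a set \<Rightarrow> 'a set \<Rightarrow> bool" where
  "fischer_subspace G D S \<longleftrightarrow> S \<subseteq> D \<and> S \<noteq> {} \<and>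
     (\<forall>p \<in> S. \<forall>q \<in> S. collinear G D p q \<longrightarrow> wedge G D p q \<in> S)"

definition fischer_span :: "('a, 'b) monoid_scheme \<Rightarrow> 'a set \<Rightarrow> 'a set \<Rightarrow> 'a set" where
  "fischer_span G D Y = {v. \<forall>S. fischer_subspace G D S \<and> Y \<subseteq> S \<longrightarrow> v \<in> S}"

text \<open>The standard model has as
lines the four indices 0..3 and as points the 2-subsets of {0..3}; the point {i,j} lies on
lines i and j.\<close>

definition complete_quadrilateral :: "('a, 'b) monoid_scheme \<Rightarrow> 'a set \<Rightarrow> 'a set \<Rightarrow> bool" where
  "complete_quadrilateral G D S \<longleftrightarrow> fischer_subspace G D S \<and>
     (\<exists>f. bij_betw f S {P. P \<subseteq> {0..<4::nat} \<and> card P = 2} \<and>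
        (\<forall>L. (fischer_line G D L \<and> L \<subseteq> S) \<longleftrightarrow>
             (L \<subseteq> S \<and> (\<exists>i<4. f ` L = {P. P \<subseteq> {0..<4} \<and> card P = 2 \<and> i \<in> P}))))"

definition symplectic_type :: "('a, 'b) monoid_scheme \<Rightarrow> 'a set \<Rightarrow> bool" where
  "symplectic_type G D \<longleftrightarrow>
     (\<forall>L M. fischer_line G D L \<longrightarrow> fischer_line G D M \<longrightarrow> L \<noteq> M \<longrightarrow> L \<inter> M \<noteq> {} \<longrightarrow>
        complete_quadrilateral G D (fischer_span G D (L \<union> M)))"

end

theory Submission
  imports Defs
begin

(* In a symplectic Fischer space two intersecting lines span a complete quadrilateral, and
   labelling its points by the 2-subsets of {0,1,2,3} (its lines by 0,...,3) turns collinearity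
   into sharing an index. Computing in this model gives two local rules: a point off a line that
   is collinear with one point of it is collinear with exactly one of the other two; and if
   p u v, p s t are distinct lines and u s m is a line, then so is v t m.
   The first rule, applied to p, q, r against the lines of pi and to x against those of pi',
   shows that every collinearity between {p, q, r} and {x, y, z} is decided by whether p ~ x;
   this gives the two patterns and their exclusivity. The second rule then produces the common
   point w in case (a), and in case (b) the lines a e f, b d f, c d e, which with l span pi''. *)

definition quad_points :: "nat set set" where
  "quad_points = {P. P \<subseteq> {0..<4} \<and> card P = 2}"

definition quad_line :: "nat \<Rightarrow> nat set set" where
  "quad_line i = {P \<in> quad_points. i \<in> P}"

definition quad_chart :: "('a, 'b) monoid_scheme \<Rightarrow> 'a set \<Rightarrow> 'a set \<Rightarrow> ('a \<Rightarrow> nat set) \<Rightarrow> bool"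
  where "quad_chart G D S f \<longleftrightarrow> bij_betw f S quad_points \<and>
     (\<forall>L \<subseteq> S. fischer_line G D L \<longleftrightarrow> (\<exists>i<4. f ` L = quad_line i))"

lemma quad_line_eq: "quad_line i = {P. P \<subseteq> {0..<4} \<and> card P = 2 \<and> i \<in> P}"
  by (auto simp: quad_line_def quad_points_def)

lemma complete_quadrilateral_iff_chart:
  "complete_quadrilateral G D S \<longleftrightarrow> fischer_subspace G D S \<and> (\<exists>f. quad_chart G D S f)"
proof -
  have "(\<forall>L. (fischer_line G D L \<and> L \<subseteq> S) \<longleftrightarrow> (L \<subseteq> S \<and> C L)) \<longleftrightarrow>
        (\<forall>L \<subseteq> S. fischer_line G D L \<longleftrightarrow> C L)" for C
    by auto
  then show ?thesis
    unfolding complete_quadrilateral_def quad_chart_def quad_line_eq[symmetric]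
      quad_points_def[symmetric]
    by simp
qed

lemma complete_quadrilateral_chart:
  assumes "complete_quadrilateral G D S"
  obtains f where "fischer_subspace G D S" "quad_chart G D S f"
  using assms unfolding complete_quadrilateral_iff_chart by blast

lemma quad_chart_line:
  "quad_chart G D S f \<Longrightarrow> L \<subseteq> S \<Longrightarrow> fischer_line G D L \<Longrightarrow> \<exists>i<4. f ` L = quad_line i"
  by (simp add: quad_chart_def)

lemma quad_chart_lineI:
  "quad_chart G D S f \<Longrightarrow> L \<subseteq> S \<Longrightarrow> i < 4 \<Longrightarrow> f ` L = quad_line i \<Longrightarrow> fischer_line G D L"
  by (auto simp: quad_chart_def)

lemma quad_chart_inj: "quad_chart G D S f \<Longrightarrow> inj_on f S"
  by (simp add: quad_chart_def bij_betw_def)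

lemma quad_chart_image: "quad_chart G D S f \<Longrightarrow> f ` S = quad_points"
  by (simp add: quad_chart_def bij_betw_def)

lemma quad_chart_star:
  assumes f: "quad_chart G D S f"
  shows "f ` {w \<in> S. i \<in> f w} = quad_line i"
proof (intro equalityI subsetI)
  fix P assume "P \<in> f ` {w \<in> S. i \<in> f w}"
  then show "P \<in> quad_line i"
    using quad_chart_image[OF f] unfolding quad_line_def by blast
next
  fix P assume "P \<in> quad_line i"
  then have "P \<in> f ` S" "i \<in> P"
    using quad_chart_image[OF f] unfolding quad_line_def by auto
  then show "P \<in> f ` {w \<in> S. i \<in> f w}"
    by blast
qed

lemma quad_chart_eq_iff: "quad_chart G D S f \<Longrightarrow> u \<in> S \<Longrightarrow> v \<in> S \<Longrightarrow> f u = f v \<longleftrightarrow> u = v"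
  by (meson inj_on_eq_iff quad_chart_inj)

lemma card_quad_points: "card quad_points = 6"
proof -
  have "card quad_points = card {0..<4::nat} choose 2"
    unfolding quad_points_def by (rule n_subsets) simp
  then show ?thesis
    by (simp add: choose_two)
qed

lemma quad_points_enum:
  assumes "distinct [i, j, k, l]" and "{i, j, k, l} \<subseteq> {0..<4}"
  shows "quad_points = {{i, j}, {i, k}, {i, l}, {j, k}, {j, l}, {k, l}}"
proof (intro equalityI subsetI)
  have four: "{i, j, k, l} = {0..<4}"
    using assms by (intro card_subset_eq) auto
  fix P assume "P \<in> quad_points"
  then obtain u v where "P = {u, v}" "u \<noteq> v" "u \<in> {i, j, k, l}" "v \<in> {i, j, k, l}"
    unfolding quad_points_def four[symmetric] by (auto simp: card_2_iff)
  then show "P \<in> {{i, j}, {i, k}, {i, l}, {j, k}, {j, l}, {k, l}}"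
    by (elim insertE emptyE) (simp_all add: insert_commute)
next
  fix P assume "P \<in> {{i, j}, {i, k}, {i, l}, {j, k}, {j, l}, {k, l}}"
  then show "P \<in> quad_points"
    using assms unfolding quad_points_def by auto
qed

lemma quad_line_enum:
  assumes "distinct [i, j, k, l]" "{i, j, k, l} \<subseteq> {0..<4}"
  shows "quad_line i = {{i, j}, {i, k}, {i, l}}"
  unfolding quad_line_def quad_points_enum[OF assms] using assms(1) by auto

lemma quad_line_elem: "P \<in> quad_line i \<Longrightarrow> \<exists>k<4. k \<noteq> i \<and> P = {i, k}"
  unfolding quad_line_def quad_points_def by (auto simp: card_2_iff)

lemma quad_line_inter: "i \<noteq> j \<Longrightarrow> P \<in> quad_line i \<Longrightarrow> P \<in> quad_line j \<Longrightarrow> P = {i, j}"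
  by (auto dest!: quad_line_elem simp: doubleton_eq_iff)

lemma complete_quadrilateral_card: "complete_quadrilateral G D S \<Longrightarrow> card S = 6"
  unfolding complete_quadrilateral_iff_chart quad_chart_def
  using bij_betw_same_card card_quad_points by metis

lemma fischer_line_distinct: "fischer_line G D {a, b, c} \<Longrightarrow> distinct [a, b, c]"
  unfolding fischer_line_def by (auto simp: card_insert_if split: if_splits)

lemma collinear_commute: "collinear G D u v \<longleftrightarrow> collinear G D v u"
  by (auto simp: collinear_def)

lemma collinear_if_line:
  "fischer_line G D L \<Longrightarrow> u \<in> L \<Longrightarrow> v \<in> L \<Longrightarrow> u \<noteq> v \<Longrightarrow> collinear G D u v"
  by (auto simp: collinear_def)

lemma fischer_line_collinear:
  assumes "fischer_line G D {u, v, w}"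
  shows "collinear G D u v" "collinear G D u w" "collinear G D v w"
  using fischer_line_distinct[OF assms] collinear_if_line[OF assms] by simp_all

lemma collinear_line_third:
  assumes "collinear G D u v"
  obtains m where "fischer_line G D {u, v, m}"
proof -
  obtain L where L: "fischer_line G D L" "u \<in> L" "v \<in> L" "u \<noteq> v"
    using assms unfolding collinear_def by blast
  then have "card (L - {u, v}) = 1"
    by (simp add: fischer_line_def card_Diff_subset)
  then obtain m where "L - {u, v} = {m}"
    by (elim card_1_singletonE)
  then have "L = {u, v, m}"
    using L by blast
  then show thesis
    using L that by blast
qed

lemma subset_fischer_span: "Y \<subseteq> fischer_span G D Y"
  by (auto simp: fischer_span_def)

definition labelled_quadrilateral ::
    "('a, 'b) monoid_scheme \<Rightarrow> 'a set \<Rightarrow> 'a \<Rightarrow> 'a \<Rightarrow> 'a \<Rightarrow> 'a \<Rightarrow> 'a \<Rightarrow> 'a \<Rightarrow> bool"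
  where "labelled_quadrilateral G D a b c x y z \<longleftrightarrow>
     complete_quadrilateral G D {a, b, c, x, y, z} \<and> fischer_line G D {a, b, c} \<and>
     fischer_line G D {a, y, z} \<and> fischer_line G D {b, x, z} \<and> fischer_line G D {c, x, y}"

lemma labelled_quadrilateral_rotate:
  "labelled_quadrilateral G D a b c x y z \<Longrightarrow> labelled_quadrilateral G D b c a y z x"
  unfolding labelled_quadrilateral_def by (simp add: insert_commute)

lemma labelled_quadrilateral_distinct:
  assumes "labelled_quadrilateral G D a b c x y z"
  shows "distinct [a, b, c, x, y, z]"
proof (rule card_distinct)
  have "card {a, b, c, x, y, z} = 6"
    using assms complete_quadrilateral_card unfolding labelled_quadrilateral_def by blast
  then show "card (set [a, b, c, x, y, z]) = length [a, b, c, x, y, z]"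
    by simp
qed

locale symplectic_fischer_space =
  fixes G :: "('a, 'b) monoid_scheme" and D :: "'a set"
  assumes symplectic: "symplectic_type G D"
begin

lemma complete_quadrilateral_span:
  "fischer_line G D L \<Longrightarrow> fischer_line G D M \<Longrightarrow> L \<noteq> M \<Longrightarrow> L \<inter> M \<noteq> {} \<Longrightarrow>
   complete_quadrilateral G D (fischer_span G D (L \<union> M))"
  using symplectic by (simp add: symplectic_type_def)

lemma fischer_lines_eqI:
  assumes L: "fischer_line G D L" and M: "fischer_line G D M"
    and "u \<in> L" "u \<in> M" "v \<in> L" "v \<in> M" "u \<noteq> v"
  shows "L = M"
proof (rule ccontr)
  assume "L \<noteq> M"
  define S where "S = fischer_span G D (L \<union> M)"
  have "L \<inter> M \<noteq> {}"
    using assms by blast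
  then have "complete_quadrilateral G D S"
    unfolding S_def by (rule complete_quadrilateral_span[OF L M \<open>L \<noteq> M\<close>])
  then obtain f where f: "quad_chart G D S f"
    using complete_quadrilateral_chart by blast
  have "L \<union> M \<subseteq> S"
    unfolding S_def by (rule subset_fischer_span)
  then have "L \<subseteq> S" "M \<subseteq> S"
    by auto
  then obtain i j where i: "f ` L = quad_line i" and j: "f ` M = quad_line j"
    using quad_chart_line[OF f] L M by metis
  have inj: "inj_on f S"
    using f by (rule quad_chart_inj)
  have "i \<noteq> j"
    using i j inj_on_image_eq_iff[OF inj \<open>L \<subseteq> S\<close> \<open>M \<subseteq> S\<close>] \<open>L \<noteq> M\<close> by auto
  then have "f u = {i, j}" "f v = {i, j}"
    using quad_line_inter i j assms(3-6) by blast+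
  then have "u = v"
    using inj_onD[OF inj] \<open>L \<subseteq> S\<close> assms(3,5) by (metis subsetD)
  then show False
    using \<open>u \<noteq> v\<close> by simp
qed

lemma wedge_eq: "fischer_line G D {u, v, m} \<Longrightarrow> wedge G D u v = m"
  unfolding wedge_def
proof (rule the_equality)
  assume line: "fischer_line G D {u, v, m}"
  then show "m \<noteq> u \<and> m \<noteq> v \<and> fischer_line G D {u, v, m}"
    using fischer_line_distinct by fastforce
  fix r assume r: "r \<noteq> u \<and> r \<noteq> v \<and> fischer_line G D {u, v, r}"
  then have "{u, v, r} = {u, v, m}"
    using fischer_lines_eqI[of "{u, v, r}" "{u, v, m}" u v] line fischer_line_distinct by fastforce
  then show "r = m"
    using r by auto
qed

lemma fischer_subspace_closed:
  assumes "fischer_subspace G D S" "u \<in> S" "v \<in> S" "fischer_line G D {u, v, m}"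
  shows "m \<in> S"
proof -
  have "collinear G D u v"
    using assms(4) fischer_line_distinct collinear_if_line by fastforce
  then show ?thesis
    using assms wedge_eq unfolding fischer_subspace_def by metis
qed

lemma third_point_off_line:
  assumes L: "fischer_line G D {u, v, w}" and M: "fischer_line G D M" and "u \<in> M" "v \<notin> M"
  shows "w \<notin> M"
proof
  assume "w \<in> M"
  moreover have "u \<noteq> w"
    using fischer_line_distinct[OF L] by simp
  ultimately have "{u, v, w} = M"
    using fischer_lines_eqI[OF L M] \<open>u \<in> M\<close> by blast
  then show False
    using \<open>v \<notin> M\<close> by blast
qed

lemma chart_collinear_iff:
  assumes S: "fischer_subspace G D S" and f: "quad_chart G D S f" and "u \<in> S" "v \<in> S"
  shows "collinear G D u v \<longleftrightarrow> u \<noteq> v \<and> f u \<inter> f v \<noteq> {}"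
proof
  assume "collinear G D u v"
  then obtain m where line: "fischer_line G D {u, v, m}"
    by (rule collinear_line_third)
  have "m \<in> S"
    using fischer_subspace_closed[OF S \<open>u \<in> S\<close> \<open>v \<in> S\<close> line] .
  then have "{u, v, m} \<subseteq> S"
    using assms(3,4) by simp
  then obtain i where "f ` {u, v, m} = quad_line i"
    using quad_chart_line[OF f _ line] by blast
  then have "i \<in> f u" "i \<in> f v"
    unfolding quad_line_def by blast+
  then show "u \<noteq> v \<and> f u \<inter> f v \<noteq> {}"
    using fischer_line_distinct[OF line] by auto
next
  assume "u \<noteq> v \<and> f u \<inter> f v \<noteq> {}"
  then obtain i where "u \<noteq> v" "i \<in> f u" "i \<in> f v"
    by blast
  have "f u \<in> quad_points"
    using quad_chart_image[OF f] \<open>u \<in> S\<close> by blast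
  then have "i < 4"
    using \<open>i \<in> f u\<close> unfolding quad_points_def by auto
  define K where "K = {w \<in> S. i \<in> f w}"
  have "f ` K = quad_line i"
    unfolding K_def using f by (rule quad_chart_star)
  moreover have "K \<subseteq> S"
    unfolding K_def by blast
  ultimately have "fischer_line G D K"
    using quad_chart_lineI[OF f _ \<open>i < 4\<close>] by simp
  moreover have "u \<in> K" "v \<in> K"
    unfolding K_def using assms(3,4) \<open>i \<in> f u\<close> \<open>i \<in> f v\<close> by simp_all
  ultimately show "collinear G D u v"
    using collinear_if_line \<open>u \<noteq> v\<close> by metis
qed

lemma two_lines_chart:
  assumes L: "fischer_line G D {p, u, v}" and M: "fischer_line G D {p, s, t}"
    and LM: "{p, u, v} \<noteq> {p, s, t}"
  obtains S f i j k l where "fischer_subspace G D S" "quad_chart G D S f" "{p, u, v, s, t} \<subseteq> S"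
    "distinct [i, j, k, l]" "{i, j, k, l} \<subseteq> {0..<4}"
    "f p = {i, j}" "f u = {i, k}" "f v = {i, l}"
    "f s = {j, k} \<and> f t = {j, l} \<or> f s = {j, l} \<and> f t = {j, k}"
proof -
  define S where "S = fischer_span G D ({p, u, v} \<union> {p, s, t})"
  have "{p, u, v} \<inter> {p, s, t} \<noteq> {}"
    by blast
  then have "complete_quadrilateral G D S"
    unfolding S_def by (rule complete_quadrilateral_span[OF L M LM])
  then obtain f where sub: "fischer_subspace G D S" and f: "quad_chart G D S f"
    by (rule complete_quadrilateral_chart)
  have "{p, u, v} \<union> {p, s, t} \<subseteq> S"
    unfolding S_def by (rule subset_fischer_span)
  then have pts: "{p, u, v, s, t} \<subseteq> S" and LS: "{p, u, v} \<subseteq> S" and MS: "{p, s, t} \<subseteq> S"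
    by auto
  obtain i where "i < 4" and i: "f ` {p, u, v} = quad_line i"
    using quad_chart_line[OF f LS L] by blast
  obtain j where "j < 4" and j: "f ` {p, s, t} = quad_line j"
    using quad_chart_line[OF f MS M] by blast
  have "i \<noteq> j"
    using i j inj_on_image_eq_iff[OF quad_chart_inj[OF f] LS MS] LM by auto
  have fp: "f p = {i, j}"
    using quad_line_inter[OF \<open>i \<noteq> j\<close>] i j by blast
  have "f u \<in> quad_line i" "f v \<in> quad_line i" "f s \<in> quad_line j" "f t \<in> quad_line j"
    using i j by blast+
  then obtain k l where "k < 4" "k \<noteq> i" and fu: "f u = {i, k}"
    and "l < 4" "l \<noteq> i" and fv: "f v = {i, l}"
    using quad_line_elem by metis
  have ne: "f p \<noteq> f u" "f p \<noteq> f v" "f u \<noteq> f v" "f p \<noteq> f s" "f p \<noteq> f t" "f s \<noteq> f t"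
    using quad_chart_eq_iff[OF f] pts fischer_line_distinct[OF L] fischer_line_distinct[OF M]
    by auto
  have "k \<noteq> j" "l \<noteq> j" "k \<noteq> l"
    using ne(1-3) fp fu fv by auto
  then have dist: "distinct [i, j, k, l]"
    using \<open>i \<noteq> j\<close> \<open>k \<noteq> i\<close> \<open>l \<noteq> i\<close> by auto
  have four: "{i, j, k, l} \<subseteq> {0..<4}"
    using \<open>i < 4\<close> \<open>j < 4\<close> \<open>k < 4\<close> \<open>l < 4\<close> by auto
  have "quad_line j = {{j, i}, {j, k}, {j, l}}"
    by (rule quad_line_enum) (use dist four in auto)
  then have "f s \<in> {{j, k}, {j, l}}" "f t \<in> {{j, k}, {j, l}}"
    using \<open>f s \<in> quad_line j\<close> \<open>f t \<in> quad_line j\<close> ne(4,5) fp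
    by (auto simp: insert_commute)
  then have "f s = {j, k} \<and> f t = {j, l} \<or> f s = {j, l} \<and> f t = {j, k}"
    using ne(6) by auto
  then show thesis
    by (rule that[OF sub f pts dist four fp fu fv])
qed

lemma collinear_xor:
  assumes line: "fischer_line G D {a, b, c}" and "p \<notin> {a, b, c}" and "collinear G D p a"
  shows "collinear G D p b \<longleftrightarrow> \<not> collinear G D p c"
proof -
  obtain p' where M: "fischer_line G D {a, p, p'}"
    using \<open>collinear G D p a\<close> collinear_commute collinear_line_third by metis
  have "{a, b, c} \<noteq> {a, p, p'}"
    using \<open>p \<notin> {a, b, c}\<close> by blast
  then obtain S f i j k l where sub: "fischer_subspace G D S" and f: "quad_chart G D S f"
    and pts: "{a, b, c, p, p'} \<subseteq> S" and dist: "distinct [i, j, k, l]" and "{i, j, k, l} \<subseteq> {0..<4}"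
    and "f a = {i, j}" and fb: "f b = {i, k}" and fc: "f c = {i, l}"
    and fp: "f p = {j, k} \<and> f p' = {j, l} \<or> f p = {j, l} \<and> f p' = {j, k}"
    by (rule two_lines_chart[OF line M])
  have "collinear G D p b \<longleftrightarrow> p \<noteq> b \<and> f p \<inter> f b \<noteq> {}"
    "collinear G D p c \<longleftrightarrow> p \<noteq> c \<and> f p \<inter> f c \<noteq> {}"
    using chart_collinear_iff[OF sub f] pts by simp_all
  then show ?thesis
    using \<open>p \<notin> {a, b, c}\<close> fb fc fp dist by auto
qed

lemma not_collinear_third:
  "fischer_line G D {a, b, c} \<Longrightarrow> p \<notin> {a, b, c} \<Longrightarrow> collinear G D p a \<Longrightarrow> collinear G D p b \<Longrightarrow>
   \<not> collinear G D p c"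
  using collinear_xor by blast

lemma quadrilateral_fourth_line:
  assumes L: "fischer_line G D {p, u, v}" and M: "fischer_line G D {p, s, t}"
    and N: "fischer_line G D {u, s, m}" and "u \<noteq> t"
  shows "fischer_line G D {v, t, m}"
proof -
  have "u \<notin> {p, s, t}"
    using fischer_line_distinct[OF L] fischer_line_distinct[OF N] \<open>u \<noteq> t\<close> by auto
  then have "{p, u, v} \<noteq> {p, s, t}"
    by blast
  then obtain S f i j k l where sub: "fischer_subspace G D S" and f: "quad_chart G D S f"
    and pts: "{p, u, v, s, t} \<subseteq> S" and dist: "distinct [i, j, k, l]"
    and four: "{i, j, k, l} \<subseteq> {0..<4}"
    and "f p = {i, j}" and fu: "f u = {i, k}" and fv: "f v = {i, l}"
    and st: "f s = {j, k} \<and> f t = {j, l} \<or> f s = {j, l} \<and> f t = {j, k}"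
    by (rule two_lines_chart[OF L M])
  have "f u \<inter> f s \<noteq> {}"
    using fischer_line_collinear(1)[OF N] chart_collinear_iff[OF sub f] pts by simp
  then have fs: "f s = {j, k}" and ft: "f t = {j, l}"
    using st fu dist by auto
  have "m \<in> S"
    using fischer_subspace_closed[OF sub _ _ N] pts by simp
  then obtain n where n: "f ` {u, s, m} = quad_line n"
    using quad_chart_line[OF f _ N] pts by auto
  then have "n \<in> f u" "n \<in> f s"
    unfolding quad_line_def by blast+
  then have "n = k"
    using fu fs dist by auto
  then have "f m \<in> quad_line k"
    using n by blast
  moreover have "quad_line k = {{k, i}, {k, j}, {k, l}}"
    by (rule quad_line_enum) (use dist four in auto)
  moreover have "f m \<noteq> f u" "f m \<noteq> f s"
    using quad_chart_eq_iff[OF f] \<open>m \<in> S\<close> pts fischer_line_distinct[OF N] by auto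
  ultimately have fm: "f m = {k, l}"
    using fu fs by (auto simp: insert_commute)
  have "quad_line l = {{l, i}, {l, j}, {l, k}}"
    by (rule quad_line_enum) (use dist four in auto)
  then have "f ` {v, t, m} = quad_line l"
    using fv ft fm by (simp add: insert_commute)
  moreover have "{v, t, m} \<subseteq> S" "l < 4"
    using pts \<open>m \<in> S\<close> four by auto
  ultimately show ?thesis
    using quad_chart_lineI[OF f] by blast
qed

lemma labelled_quadrilateral_opposite:
  assumes "labelled_quadrilateral G D a b c x y z"
  shows "\<not> collinear G D a x"
proof (rule not_collinear_third)
  have "fischer_line G D {a, b, c}" "fischer_line G D {a, y, z}" "fischer_line G D {b, x, z}"
    using assms unfolding labelled_quadrilateral_def by simp_all
  then show "fischer_line G D {b, z, x}" "collinear G D a b" "collinear G D a z"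
    using fischer_line_collinear(1,2) by (simp_all add: insert_commute)
  show "a \<notin> {b, z, x}"
    using labelled_quadrilateral_distinct[OF assms] by simp
qed

lemma labelled_quadrilateral_outside_point:
  assumes "labelled_quadrilateral G D a b c x y z" and "u \<notin> {a, b, c, x, y, z}"
    and "collinear G D u b" and "collinear G D u c"
  shows "(collinear G D u x \<longleftrightarrow> \<not> collinear G D u y) \<and> (collinear G D u x \<longleftrightarrow> \<not> collinear G D u z)"
  using collinear_xor[of c x y u] collinear_xor[of b x z u] assms
  unfolding labelled_quadrilateral_def by simp

lemma labelled_quadrilateral_intro:
  assumes abc: "fischer_line G D {a, b, c}" and aef: "fischer_line G D {a, e, f}"
    and bdf: "fischer_line G D {b, d, f}" and cde: "fischer_line G D {c, d, e}"
    and "e \<notin> {a, b, c}"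
  shows "labelled_quadrilateral G D a b c d e f"
proof -
  have "f \<notin> {a, b, c}"
    using third_point_off_line[OF aef abc] \<open>e \<notin> {a, b, c}\<close> by simp
  moreover have "d \<notin> {a, b, c}"
    using third_point_off_line[of c e d, OF _ abc] cde \<open>e \<notin> {a, b, c}\<close>
    by (simp add: insert_commute)
  ultimately have six: "card {a, b, c, d, e, f} = 6"
    using \<open>e \<notin> {a, b, c}\<close> fischer_line_distinct[OF abc] fischer_line_distinct[OF aef]
      fischer_line_distinct[OF bdf] fischer_line_distinct[OF cde]
    by auto
  define S where "S = fischer_span G D ({a, b, c} \<union> {a, e, f})"
  have "{a, b, c} \<noteq> {a, e, f}" "{a, b, c} \<inter> {a, e, f} \<noteq> {}"
    using \<open>e \<notin> {a, b, c}\<close> by blast+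
  then have cq: "complete_quadrilateral G D S"
    unfolding S_def by (intro complete_quadrilateral_span[OF abc aef])
  have "{a, b, c} \<union> {a, e, f} \<subseteq> S"
    unfolding S_def by (rule subset_fischer_span)
  moreover have "d \<in> S"
    using complete_quadrilateral_chart[OF cq] fischer_subspace_closed[of S b f d] bdf calculation
    by (auto simp: insert_commute)
  ultimately have "{a, b, c, d, e, f} \<subseteq> S"
    by auto
  moreover have "card S = 6"
    using cq by (rule complete_quadrilateral_card)
  ultimately have "{a, b, c, d, e, f} = S"
    using six by (intro card_subset_eq) (auto intro: card_ge_0_finite)
  then show ?thesis
    using cq abc aef bdf cde unfolding labelled_quadrilateral_def by simp
qed

end

locale two_quadrilaterals_on_line = symplectic_fischer_space +
  fixes a b c x y z p q r :: 'a
  assumes pi: "labelled_quadrilateral G D a b c x y z"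
    and pi': "labelled_quadrilateral G D a b c p q r"
    and different: "{a, b, c, x, y, z} \<noteq> {a, b, c, p, q, r}"
begin

lemma quadrilateral_lines:
  "fischer_line G D {a, b, c}" "fischer_line G D {a, y, z}" "fischer_line G D {b, x, z}"
  "fischer_line G D {c, x, y}" "fischer_line G D {a, q, r}" "fischer_line G D {b, p, r}"
  "fischer_line G D {c, p, q}"
  using pi pi' by (simp_all add: labelled_quadrilateral_def)

lemma corresponding_points_distinct: "p \<noteq> x" "q \<noteq> y" "r \<noteq> z"
proof -
  have d2: "distinct [a, b, c, p, q, r]"
    using labelled_quadrilateral_distinct[OF pi'] .
  show "p \<noteq> x"
  proof
    assume "p = x"
    have "{b, p, r} = {b, x, z}"
      by (rule fischer_lines_eqI[OF quadrilateral_lines(6) quadrilateral_lines(3), of b p])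
        (use \<open>p = x\<close> d2 in auto)
    then have "r \<in> {b, x, z}"
      by blast
    moreover have "{c, p, q} = {c, x, y}"
      by (rule fischer_lines_eqI[OF quadrilateral_lines(7) quadrilateral_lines(4), of c p])
        (use \<open>p = x\<close> d2 in auto)
    then have "q \<in> {c, x, y}"
      by blast
    ultimately have "r = z" "q = y"
      using d2 \<open>p = x\<close> by auto
    then show False
      using different \<open>p = x\<close> by simp
  qed
  show "q \<noteq> y"
  proof
    assume "q = y"
    have "{c, p, q} = {c, x, y}"
      by (rule fischer_lines_eqI[OF quadrilateral_lines(7) quadrilateral_lines(4), of c q])
        (use \<open>q = y\<close> d2 in auto)
    then have "p \<in> {c, x, y}"
      by blast
    then show False
      using d2 \<open>p \<noteq> x\<close> \<open>q = y\<close> by auto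
  qed
  show "r \<noteq> z"
  proof
    assume "r = z"
    have "{b, p, r} = {b, x, z}"
      by (rule fischer_lines_eqI[OF quadrilateral_lines(6) quadrilateral_lines(3), of b r])
        (use \<open>r = z\<close> d2 in auto)
    then have "p \<in> {b, x, z}"
      by blast
    then show False
      using d2 \<open>p \<noteq> x\<close> \<open>r = z\<close> by auto
  qed
qed

lemma nine_points_distinct: "distinct [a, b, c, x, y, z, p, q, r]"
proof -
  have "\<not> collinear G D a x" "\<not> collinear G D b y" "\<not> collinear G D c z"
    using labelled_quadrilateral_opposite[OF pi]
      labelled_quadrilateral_opposite[OF labelled_quadrilateral_rotate[OF pi]]
      labelled_quadrilateral_opposite[OF labelled_quadrilateral_rotate[OF
        labelled_quadrilateral_rotate[OF pi]]] .
  moreover have "collinear G D a q" "collinear G D a r" "collinear G D b p" "collinear G D b r"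
    "collinear G D c p" "collinear G D c q"
    using fischer_line_collinear(1,2)[OF quadrilateral_lines(5)]
      fischer_line_collinear(1,2)[OF quadrilateral_lines(6)]
      fischer_line_collinear(1,2)[OF quadrilateral_lines(7)] .
  ultimately have "q \<noteq> x" "r \<noteq> x" "p \<noteq> y" "r \<noteq> y" "p \<noteq> z" "q \<noteq> z"
    by auto
  then show ?thesis
    using labelled_quadrilateral_distinct[OF pi] labelled_quadrilateral_distinct[OF pi']
      corresponding_points_distinct by auto
qed

lemma cross_collinearities:
  "(collinear G D q y \<longleftrightarrow> collinear G D p x) \<and> (collinear G D r z \<longleftrightarrow> collinear G D p x) \<and>
   (collinear G D p y \<longleftrightarrow> \<not> collinear G D p x) \<and> (collinear G D p z \<longleftrightarrow> \<not> collinear G D p x) \<and>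
   (collinear G D q x \<longleftrightarrow> \<not> collinear G D p x) \<and> (collinear G D q z \<longleftrightarrow> \<not> collinear G D p x) \<and>
   (collinear G D r x \<longleftrightarrow> \<not> collinear G D p x) \<and> (collinear G D r y \<longleftrightarrow> \<not> collinear G D p x)"
proof -
  note dist = nine_points_distinct
  have col: "collinear G D p b" "collinear G D p c" "collinear G D x b" "collinear G D x c"
    "collinear G D q c" "collinear G D q a" "collinear G D r a" "collinear G D r b"
    using fischer_line_collinear quadrilateral_lines collinear_commute by metis+
  have "(collinear G D p x \<longleftrightarrow> \<not> collinear G D p y) \<and>
    (collinear G D p x \<longleftrightarrow> \<not> collinear G D p z)"
    by (rule labelled_quadrilateral_outside_point[OF pi]) (use dist col in auto)
  moreover have "(collinear G D x p \<longleftrightarrow> \<not> collinear G D x q) \<and>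
    (collinear G D x p \<longleftrightarrow> \<not> collinear G D x r)"
    by (rule labelled_quadrilateral_outside_point[OF pi']) (use dist col in auto)
  moreover have "(collinear G D q y \<longleftrightarrow> \<not> collinear G D q z) \<and>
    (collinear G D q y \<longleftrightarrow> \<not> collinear G D q x)"
    by (rule labelled_quadrilateral_outside_point[OF labelled_quadrilateral_rotate[OF pi]])
      (use dist col in auto)
  moreover have "(collinear G D r z \<longleftrightarrow> \<not> collinear G D r x) \<and>
    (collinear G D r z \<longleftrightarrow> \<not> collinear G D r y)"
    by (rule labelled_quadrilateral_outside_point[OF labelled_quadrilateral_rotate[OF
          labelled_quadrilateral_rotate[OF pi]]]) (use dist col in auto)
  ultimately show ?thesis
    using collinear_commute[of G D x] by blast
qed

lemma common_wedge_if_collinear: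
  assumes "collinear G D p x"
  shows "wedge G D p x = wedge G D q y \<and> wedge G D q y = wedge G D r z \<and>
    \<not> collinear G D (wedge G D p x) a \<and> \<not> collinear G D (wedge G D p x) b \<and>
    \<not> collinear G D (wedge G D p x) c"
proof -
  note dist = nine_points_distinct
  obtain w where pxw: "fischer_line G D {p, x, w}"
    using assms by (rule collinear_line_third)
  have wrz: "fischer_line G D {w, r, z}"
    by (rule quadrilateral_fourth_line[of p x w b r z])
      (use pxw quadrilateral_lines dist in \<open>auto simp: insert_commute\<close>)
  have wqy: "fischer_line G D {w, q, y}"
    by (rule quadrilateral_fourth_line[of p x w c q y])
      (use pxw quadrilateral_lines dist in \<open>auto simp: insert_commute\<close>)
  have "wedge G D p x = w" "wedge G D q y = w" "wedge G D r z = w"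
    using wedge_eq pxw wqy wrz by (simp_all add: insert_commute)
  moreover have "w \<notin> {b, x, z}" "w \<notin> {c, x, y}" "w \<notin> {a, y, z}"
  proof -
    have xpw: "fischer_line G D {x, p, w}" and yqw: "fischer_line G D {y, q, w}"
      using pxw wqy by (simp_all add: insert_commute)
    show "w \<notin> {b, x, z}"
      by (rule third_point_off_line[OF xpw quadrilateral_lines(3)]) (use dist in auto)
    show "w \<notin> {c, x, y}"
      by (rule third_point_off_line[OF xpw quadrilateral_lines(4)]) (use dist in auto)
    show "w \<notin> {a, y, z}"
      by (rule third_point_off_line[OF yqw quadrilateral_lines(2)]) (use dist in auto)
  qed
  moreover have "collinear G D w x" "collinear G D w y" "collinear G D w z"
    using fischer_line_collinear pxw wqy wrz collinear_commute by (metis insert_commute)+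
  ultimately show ?thesis
    using not_collinear_third[of x z b w] not_collinear_third[of x y c w]
      not_collinear_third[of y z a w] quadrilateral_lines(2-4)
    by (simp add: insert_commute)
qed

lemma third_quadrilateral:
  assumes ryd: "fischer_line G D {r, y, d}" and rxe: "fischer_line G D {r, x, e}"
    and qxf: "fischer_line G D {q, x, f}"
  shows "fischer_line G D {d, q, z}" "fischer_line G D {e, p, z}" "fischer_line G D {f, p, y}"
    "labelled_quadrilateral G D a b c d e f"
proof -
  note dist = nine_points_distinct
  show dqz: "fischer_line G D {d, q, z}"
    by (rule quadrilateral_fourth_line[of r y d a q z])
      (use ryd quadrilateral_lines dist in \<open>auto simp: insert_commute\<close>)
  show epz: "fischer_line G D {e, p, z}"
    by (rule quadrilateral_fourth_line[of r x e b p z])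
      (use rxe quadrilateral_lines dist in \<open>auto simp: insert_commute\<close>)
  show fpy: "fischer_line G D {f, p, y}"
    by (rule quadrilateral_fourth_line[of q x f c p y])
      (use qxf quadrilateral_lines dist in \<open>auto simp: insert_commute\<close>)
  have xqf: "fischer_line G D {x, q, f}" and xre: "fischer_line G D {x, r, e}"
    and zpe: "fischer_line G D {z, p, e}"
    using qxf rxe epz by (simp_all add: insert_commute)
  have "f \<notin> {b, x, z}"
    by (rule third_point_off_line[OF xqf quadrilateral_lines(3)]) (use dist in auto)
  moreover have "e \<notin> {b, x, z}"
    by (rule third_point_off_line[OF xre quadrilateral_lines(3)]) (use dist in auto)
  moreover have "e \<notin> {c, x, y}"
    by (rule third_point_off_line[OF xre quadrilateral_lines(4)]) (use dist in auto)
  moreover have "e \<notin> {a, y, z}"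
    by (rule third_point_off_line[OF zpe quadrilateral_lines(2)]) (use dist in auto)
  ultimately have "z \<noteq> f" "y \<noteq> e" "e \<notin> {a, b, c}"
    by auto
  have "fischer_line G D {e, f, a}"
    by (rule quadrilateral_fourth_line[of p z e y f a])
      (use epz fpy quadrilateral_lines \<open>z \<noteq> f\<close> in \<open>auto simp: insert_commute\<close>)
  moreover have "fischer_line G D {d, f, b}"
    by (rule quadrilateral_fourth_line[of q z d x f b])
      (use dqz qxf quadrilateral_lines \<open>z \<noteq> f\<close> in \<open>auto simp: insert_commute\<close>)
  moreover have "fischer_line G D {d, e, c}"
    by (rule quadrilateral_fourth_line[of r y d x e c])
      (use ryd rxe quadrilateral_lines \<open>y \<noteq> e\<close> in \<open>auto simp: insert_commute\<close>)
  ultimately show "labelled_quadrilateral G D a b c d e f"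
    using labelled_quadrilateral_intro quadrilateral_lines(1) \<open>e \<notin> {a, b, c}\<close>
    by (simp add: insert_commute)
qed

lemma third_quadrilateral_if_not_collinear:
  assumes "\<not> collinear G D p x"
  shows "wedge G D r y = wedge G D q z \<and> wedge G D r x = wedge G D p z \<and>
    wedge G D q x = wedge G D p y \<and>
    labelled_quadrilateral G D a b c (wedge G D r y) (wedge G D r x) (wedge G D q x)"
proof -
  have "collinear G D r y" "collinear G D r x" "collinear G D q x"
    using cross_collinearities assms by simp_all
  then obtain d e f where ryd: "fischer_line G D {r, y, d}" and rxe: "fischer_line G D {r, x, e}"
    and qxf: "fischer_line G D {q, x, f}"
    by (metis collinear_line_third)
  note new_lines = third_quadrilateral[OF ryd rxe qxf]
  have "wedge G D r y = d" "wedge G D q z = d" "wedge G D r x = e" "wedge G D p z = e"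
    "wedge G D q x = f" "wedge G D p y = f"
    using wedge_eq ryd rxe qxf new_lines(1-3) by (simp_all add: insert_commute)
  then show ?thesis
    using new_lines(4) by simp
qed

end

theorem proposition5p20:
  fixes G :: "('a, 'b) monoid_scheme" and D :: "'a set"
    and a b c x y z p q r :: 'a
  assumes "three_transposition_group G D"
    and "symplectic_type G D"
    and "complete_quadrilateral G D {a, b, c, x, y, z}"
    and "fischer_line G D {a, b, c}" and "fischer_line G D {a, y, z}"
    and "fischer_line G D {b, x, z}" and "fischer_line G D {c, x, y}"
    and "complete_quadrilateral G D {a, b, c, p, q, r}"
    and "fischer_line G D {a, q, r}"
    and "fischer_line G D {b, p, r}" and "fischer_line G D {c, p, q}"
    and "{a, b, c, x, y, z} \<noteq> {a, b, c, p, q, r}"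
  shows
    "let col = collinear G D; w = wedge G D;
         A = (col p x \<and> col q y \<and> col r z \<and>
              \<not> col p y \<and> \<not> col p z \<and> \<not> col q x \<and> \<not> col q z \<and> \<not> col r x \<and> \<not> col r y \<and>
              w p x = w q y \<and> w q y = w r z \<and>
              \<not> col (w p x) a \<and> \<not> col (w p x) b \<and> \<not> col (w p x) c);
         B = (\<not> col p x \<and> \<not> col q y \<and> \<not> col r z \<and>
              col p y \<and> col p z \<and> col q x \<and> col q z \<and> col r x \<and> col r y \<and>
              w r y = w q z \<and> w r x = w p z \<and> w q x = w p y \<and>
              (let d = w r y; e = w r x; f = w q x in
                 fischer_line G D {a, e, f} \<and> fischer_line G D {b, d, f} \<and>
                 fischer_line G D {c, d, e} \<and>
                 complete_quadrilateral G D {a, b, c, d, e, f}))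
     in (A \<or> B) \<and> \<not> (A \<and> B)"
proof -
  interpret two_quadrilaterals_on_line G D a b c x y z p q r
    using assms(2-12) by unfold_locales (simp_all add: labelled_quadrilateral_def)
  show ?thesis
  proof (cases "collinear G D p x")
    case True
    then show ?thesis
      using cross_collinearities common_wedge_if_collinear[OF True] unfolding Let_def by blast
  next
    case False
    then show ?thesis
      using cross_collinearities third_quadrilateral_if_not_collinear[OF False]
      unfolding Let_def labelled_quadrilateral_def by blast
  qed
qed

end
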